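(* If $(V,\rho)$ is a purely irreducible $\mathfrak{sl}(2)$-module, then it is a Casimir module (i.e. $C_\rho=\mu\,\mathrm{Id}_V$ for some $\mu\in\mathbb{C}$) and $\mathrm{End}_{\mathfrak{sl}(2)}(V)=\mathbb{C}$.
   Context: $\mathfrak{sl}(2)$ has basis $L_{-1}=f$, $L_0=-\tfrac12 h$, $L_1=-e$ for a Chevalley basis $e,f,h$. An $\mathfrak{sl}(2)$-module $(V,\rho)$ is a $\mathbb{C}[z]$-module via $z\cdot v=\rho(L_0)v$; its Casimir operator is $C_\rho=\rho(L_0)(\rho(L_0)-1)-\rho(L_{-1})\rho(L_1)$. A finite rank torsion free module is one that is torsion free over $\mathbb{C}[z]$ with localization $S^{-1}V$ ($S=\mathbb{C}[z]\setminus\{0\}$) finite-dimensional over $\mathbb{C}(z)$. A submodule $V'$ is pure if $V/V'$ is torsion free. $(V,\rho)$ is purely irreducible if it is a nonzero finite rank torsion free $\mathfrak{sl}(2)$-module having no pure $\mathfrak{sl}(2)$-submodules other than $0$ and $V$ (equivalently, every proper nonzero $\mathfrak{sl}(2)$-submodule $V'$ has $V/V'$ torsion; equivalently, $S^{-1}V$ with its induced $\mathfrak{sl}(2)$-action has no nonzero proper $\mathfrak{sl}(2)$-submodule that is a $\mathbb{C}(z)$-subspace). *)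

theory Defs
  imports "HOL-Computational_Algebra.Polynomial"
begin

text \<open>An sl(2)-module is a complex vector space (carrier = the type 'v, scalar
multiplication sc) with linear operators Lm = rho(L_{-1}), L0 = rho(L_0), Lp = rho(L_1)
satisfying [L_m, L_n] = (m - n) L_{m+n}.\<close>

definition sl2_module ::
  "(complex \<Rightarrow> 'v::ab_group_add \<Rightarrow> 'v) \<Rightarrow> ('v \<Rightarrow> 'v) \<Rightarrow> ('v \<Rightarrow> 'v) \<Rightarrow> ('v \<Rightarrow> 'v) \<Rightarrow> bool" where
  "sl2_module sc Lm L0 Lp \<longleftrightarrow>
     vector_space sc \<and>
     Vector_Spaces.linear sc sc Lm \<and> Vector_Spaces.linear sc sc L0 \<and> Vector_Spaces.linear sc sc Lp \<and>
     (\<forall>v. Lp (Lm v) - Lm (Lp v) = sc 2 (L0 v)) \<and>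
     (\<forall>v. L0 (Lp v) - Lp (L0 v) = - Lp v) \<and>
     (\<forall>v. L0 (Lm v) - Lm (L0 v) = Lm v)"

text \<open>Action of a polynomial p in C[z] via z acting as T = rho(L_0).\<close>
definition opoly :: "(complex \<Rightarrow> 'v::ab_group_add \<Rightarrow> 'v) \<Rightarrow> ('v \<Rightarrow> 'v) \<Rightarrow> complex poly \<Rightarrow> 'v \<Rightarrow> 'v" where
  "opoly sc T p v = (\<Sum>i\<le>degree p. sc (coeff p i) ((T ^^ i) v))"

definition torsion_free :: "(complex \<Rightarrow> 'v::ab_group_add \<Rightarrow> 'v) \<Rightarrow> ('v \<Rightarrow> 'v) \<Rightarrow> bool" where
  "torsion_free sc T \<longleftrightarrow> (\<forall>p v. p \<noteq> 0 \<and> opoly sc T p v = 0 \<longrightarrow> v = 0)"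

text \<open>S^{-1}V finite-dimensional over C(z): finitely many elements b (as b/1) span S^{-1}V,
i.e. every v has some nonzero p with p.v in the C[z]-span of B.\<close>
definition finite_rank :: "(complex \<Rightarrow> 'v::ab_group_add \<Rightarrow> 'v) \<Rightarrow> ('v \<Rightarrow> 'v) \<Rightarrow> bool" where
  "finite_rank sc T \<longleftrightarrow>
     (\<exists>B. finite B \<and> (\<forall>v. \<exists>p c. p \<noteq> 0 \<and> opoly sc T p v = (\<Sum>b\<in>B. opoly sc T (c b) b)))"

definition sl2_submodule ::
  "(complex \<Rightarrow> 'v::ab_group_add \<Rightarrow> 'v) \<Rightarrow> ('v \<Rightarrow> 'v) \<Rightarrow> ('v \<Rightarrow> 'v) \<Rightarrow> ('v \<Rightarrow> 'v) \<Rightarrow> 'v set \<Rightarrow> bool" where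
  "sl2_submodule sc Lm L0 Lp W \<longleftrightarrow>
     module.subspace sc W \<and> Lm ` W \<subseteq> W \<and> L0 ` W \<subseteq> W \<and> Lp ` W \<subseteq> W"

text \<open>Pure: V/W torsion free over C[z].\<close>
definition pure_submodule ::
  "(complex \<Rightarrow> 'v::ab_group_add \<Rightarrow> 'v) \<Rightarrow> ('v \<Rightarrow> 'v) \<Rightarrow> ('v \<Rightarrow> 'v) \<Rightarrow> ('v \<Rightarrow> 'v) \<Rightarrow> 'v set \<Rightarrow> bool" where
  "pure_submodule sc Lm L0 Lp W \<longleftrightarrow>
     sl2_submodule sc Lm L0 Lp W \<and> (\<forall>p v. p \<noteq> 0 \<and> opoly sc L0 p v \<in> W \<longrightarrow> v \<in> W)"

definition purely_irreducible ::
  "(complex \<Rightarrow> 'v::ab_group_add \<Rightarrow> 'v) \<Rightarrow> ('v \<Rightarrow> 'v) \<Rightarrow> ('v \<Rightarrow> 'v) \<Rightarrow> ('v \<Rightarrow> 'v) \<Rightarrow> bool" where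
  "purely_irreducible sc Lm L0 Lp \<longleftrightarrow>
     sl2_module sc Lm L0 Lp \<and> (\<exists>v::'v. v \<noteq> 0) \<and>
     torsion_free sc L0 \<and> finite_rank sc L0 \<and>
     (\<forall>W. pure_submodule sc Lm L0 Lp W \<longrightarrow> W = {0} \<or> W = UNIV)"

definition casimir :: "('v::ab_group_add \<Rightarrow> 'v) \<Rightarrow> ('v \<Rightarrow> 'v) \<Rightarrow> ('v \<Rightarrow> 'v) \<Rightarrow> 'v \<Rightarrow> 'v" where
  "casimir Lm L0 Lp v = L0 (L0 v) - L0 v - Lm (Lp v)"

end

theory Submission
  imports Defs "HOL-Computational_Algebra.Fundamental_Theorem_Algebra"
begin

text \<open>
  Let \<open>\<phi>\<close> commute with the \<open>sl(2)\<close>-action. Then \<open>\<phi>\<close> is \<open>\<complex>[z]\<close>-linear, so \<open>V\<close> is a module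
  over \<open>\<complex>[z][t]\<close> with \<open>t\<close> acting as \<open>\<phi>\<close>. Finite rank and torsion-freeness give a nonzero
  \<open>F \<in> \<complex>[z][t]\<close> of minimal \<open>t\<close>-degree killing some \<open>v \<noteq> 0\<close>. Since \<open>L\<^sub>1 F(z) = F(z+1) L\<^sub>1\<close> and
  \<open>L\<^sub>-\<^sub>1 F(z) = F(z-1) L\<^sub>-\<^sub>1\<close>, and since a nonzero highest-weight vector has an \<open>L\<^sub>-\<^sub>1\<close>-string that
  never vanishes, every one of \<open>N + 1\<close> consecutive shifts \<open>F(z+m+i)\<close> kills a nonzero vector, where
  \<open>N\<close> is the rank. These vectors are \<open>\<complex>[z]\<close>-dependent, which forces two of the shifts to kill a
  common vector; by minimality they are proportional, so \<open>F(z+q) \<sim> F(z)\<close> for some \<open>q \<noteq> 0\<close>.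
  A rational function invariant under \<open>z \<mapsto> z + q\<close> is constant, hence \<open>F = c(z) G(t)\<close> with
  \<open>G \<in> \<complex>[t]\<close>, so \<open>G(\<phi>)\<close> has a nonzero kernel and \<open>\<phi>\<close> has an eigenvector. Its eigenspace is a
  nonzero pure submodule, hence everything. The Casimir operator commutes with the action, so it
  is a scalar as well.
\<close>

section \<open>Polynomial actions\<close>

definition poly_act ::
  "('a::comm_ring_1 \<Rightarrow> 'v::ab_group_add \<Rightarrow> 'v) \<Rightarrow> ('v \<Rightarrow> 'v) \<Rightarrow> 'a poly \<Rightarrow> 'v \<Rightarrow> 'v" where
  "poly_act s T p v = (\<Sum>i\<le>degree p. s (coeff p i) ((T ^^ i) v))"

lemma opoly_eq_poly_act: "opoly = poly_act"
  by (intro ext) (simp add: opoly_def poly_act_def)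

context module
begin

lemma module_hom_funpow: "module_hom scale scale T \<Longrightarrow> module_hom scale scale (T ^^ n)"
  by (induct n) (simp_all add: module_hom_id module_hom_compose)

lemma poly_act_bound:
  assumes "degree p \<le> N"
  shows "poly_act scale T p v = (\<Sum>i\<le>N. scale (coeff p i) ((T ^^ i) v))"
  unfolding poly_act_def using assms by (intro sum.mono_neutral_left) (auto simp: coeff_eq_0)

lemma poly_act_0 [simp]: "poly_act scale T 0 v = 0"
  by (simp add: poly_act_def)

lemma poly_act_const [simp]: "poly_act scale T [:a:] v = scale a v"
  by (simp add: poly_act_def)

lemma poly_act_1 [simp]: "poly_act scale T 1 v = v"
  by (simp add: poly_act_def)

lemma poly_act_add: "poly_act scale T (p + q) v = poly_act scale T p v + poly_act scale T q v"
proof -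
  let ?N = "max (degree p) (degree q)"
  have "degree (p + q) \<le> ?N" by (rule degree_add_le) auto
  then show ?thesis
    by (simp add: poly_act_bound[of _ ?N] scale_left_distrib sum.distrib)
qed

lemma poly_act_smult: "poly_act scale T (smult a p) v = scale a (poly_act scale T p v)"
  by (simp add: poly_act_bound[of _ "degree p"] scale_sum_right degree_smult_le)

lemma poly_act_sum: "poly_act scale T (sum f A) v = (\<Sum>x\<in>A. poly_act scale T (f x) v)"
  by (induct A rule: infinite_finite_induct) (simp_all add: poly_act_add)

lemma poly_act_diff: "poly_act scale T (p - q) v = poly_act scale T p v - poly_act scale T q v"
  using poly_act_add[of T "p - q" q v] by (simp add: eq_diff_eq)

lemma poly_act_monom: "poly_act scale T (monom a n) v = scale a ((T ^^ n) v)"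
proof -
  have "poly_act scale T (monom a n) v = (\<Sum>i\<le>n. scale (coeff (monom a n) i) ((T ^^ i) v))"
    by (rule poly_act_bound) (simp add: degree_monom_le)
  also have "\<dots> = (\<Sum>i\<in>{n}. scale (coeff (monom a n) i) ((T ^^ i) v))"
    by (rule sum.mono_neutral_right) (auto simp: coeff_monom)
  finally show ?thesis by simp
qed

context
  fixes T :: "'b \<Rightarrow> 'b"
  assumes T: "module_hom scale scale T"
begin

lemma module_hom_poly_act: "module_hom scale scale (poly_act scale T p)"
  using module_hom.add[OF module_hom_funpow[OF T]] module_hom.scale[OF module_hom_funpow[OF T]]
  by (simp add: module_hom_iff module_axioms poly_act_def scale_right_distrib sum.distrib
      scale_sum_right mult.commute)

lemma poly_act_pCons: "poly_act scale T (pCons a p) v = scale a v + T (poly_act scale T p v)"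
proof -
  interpret T: module_hom scale scale T by (rule T)
  have "poly_act scale T (pCons a p) v =
      (\<Sum>i\<le>Suc (degree p). scale (coeff (pCons a p) i) ((T ^^ i) v))"
    by (rule poly_act_bound) (simp add: degree_pCons_le)
  also have "\<dots> = scale a v + (\<Sum>i\<le>degree p. scale (coeff p i) ((T ^^ Suc i) v))"
    by (subst sum.atMost_Suc_shift) simp
  also have "\<dots> = scale a v + T (poly_act scale T p v)"
    by (simp add: poly_act_def T.sum T.scale)
  finally show ?thesis .
qed

lemma poly_act_mult: "poly_act scale T (p * q) v = poly_act scale T p (poly_act scale T q v)"
proof (induct p)
  case (pCons a p)
  have "pCons a p * q = smult a q + pCons 0 (p * q)" by simp
  then show ?case
    using pCons by (simp add: poly_act_add poly_act_smult poly_act_pCons)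
qed simp

lemma poly_act_commute:
  "poly_act scale T p (poly_act scale T q v) = poly_act scale T q (poly_act scale T p v)"
  by (metis mult.commute poly_act_mult)

lemma module_poly_act: "module (poly_act scale T)"
  by unfold_locales
    (simp_all add: module_hom.add[OF module_hom_poly_act] poly_act_add poly_act_mult)

lemma poly_act_pcompose:
  assumes f: "module_hom scale scale f" and fT: "\<And>x. f (T x) = poly_act scale T q (f x)"
  shows "f (poly_act scale T p v) = poly_act scale T (pcompose p q) (f v)"
proof (induct p)
  case (pCons a p)
  interpret f: module_hom scale scale f by (rule f)
  show ?case
    by (simp add: poly_act_pCons pcompose_pCons poly_act_add poly_act_mult f.add f.scale fT pCons)
qed (simp add: module_hom.zero[OF f])

lemma poly_act_commuting_hom:
  assumes "module_hom scale scale f" "\<And>x. f (T x) = T (f x)"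
  shows "f (poly_act scale T p v) = poly_act scale T p (f v)"
  using poly_act_pcompose[OF assms(1), of "[:0, 1:]"] assms(2) by (simp add: poly_act_pCons)

end

end

lemma poly_act_map_poly:
  assumes "module s" "module s'" and f_add: "\<And>x y. f (x + y) = f x + f y" and "\<tau> 0 = 0"
    and f_scale: "\<And>a x. f (s a x) = s' (\<tau> a) (f x)" and f_T: "\<And>x. f (T x) = T' (f x)"
  shows "f (poly_act s T p v) = poly_act s' T' (map_poly \<tau> p) (f v)"
proof -
  have "f 0 = 0"
    using f_add[of 0 0] by simp
  then have f_sum: "f (sum g A) = (\<Sum>x\<in>A. f (g x))" for g and A :: "nat set"
    by (induct A rule: infinite_finite_induct) (simp_all add: f_add)
  have f_pow: "f ((T ^^ i) x) = (T' ^^ i) (f x)" for i x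
    by (induct i) (simp_all add: f_T)
  have "poly_act s' T' (map_poly \<tau> p) (f v) =
      (\<Sum>i\<le>degree p. s' (coeff (map_poly \<tau> p) i) ((T' ^^ i) (f v)))"
    by (rule module.poly_act_bound[OF assms(2)]) (simp add: map_poly_degree_leq)
  also have "\<dots> = f (poly_act s T p v)"
    by (simp add: poly_act_def f_sum f_scale f_pow coeff_map_poly[of \<tau>, OF assms(4)])
  finally show ?thesis by simp
qed

section \<open>Relations in modules over a domain\<close>

lemma nontrivial_relation_if_card_gt:
  fixes s :: "'a::idom \<Rightarrow> 'v::ab_group_add \<Rightarrow> 'v"
  assumes s: "module s" and "finite B"
  shows "finite I \<Longrightarrow> card B < card I \<Longrightarrow> (\<And>i. i \<in> I \<Longrightarrow> w i = (\<Sum>b\<in>B. s (c i b) b)) \<Longrightarrow>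
    \<exists>r. (\<exists>i\<in>I. r i \<noteq> 0) \<and> (\<Sum>i\<in>I. s (r i) (w i)) = 0"
  using \<open>finite B\<close>
proof (induct B arbitrary: I w c rule: finite_induct)
  interpret module s by (rule s)
  case empty
  then obtain i0 where "i0 \<in> I" by fastforce
  with empty show ?case
    by (intro exI[of _ "\<lambda>_. 1"]) auto
next
  interpret module s by (rule s)
  case (insert b B)
  show ?case
  proof (cases "\<forall>i\<in>I. c i b = 0")
    case True
    then show ?thesis using insert by auto
  next
    case False
    then obtain i0 where i0: "i0 \<in> I" "c i0 b \<noteq> 0" by auto
    txt \<open>Fraction-free elimination of the generator \<open>b\<close> against \<open>w i0\<close>.\<close>
    define I' where "I' = I - {i0}"
    define w' where "w' i = s (c i0 b) (w i) - s (c i b) (w i0)" for i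
    define c' where "c' i b' = c i0 b * c i b' - c i b * c i0 b'" for i b'
    have "w' i = (\<Sum>b'\<in>B. s (c' i b') b')" if "i \<in> I'" for i
    proof -
      have "w' i = s (c i0 b) (s (c i b) b + (\<Sum>b'\<in>B. s (c i b') b'))
           - s (c i b) (s (c i0 b) b + (\<Sum>b'\<in>B. s (c i0 b') b'))"
        using that i0 insert by (simp add: w'_def I'_def)
      also have "\<dots> = (\<Sum>b'\<in>B. s (c' i b') b')"
        by (simp add: c'_def scale_right_distrib scale_sum_right scale_left_diff_distrib
            sum_subtractf mult.commute)
      finally show ?thesis .
    qed
    moreover have "card B < card I'"
      using insert i0 by (simp add: I'_def)
    ultimately obtain r' where r': "\<exists>i\<in>I'. r' i \<noteq> 0" "(\<Sum>i\<in>I'. s (r' i) (w' i)) = 0"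
      using insert(3)[of I' w' c'] insert(4) by (auto simp: I'_def)
    define r where "r i = (if i = i0 then - (\<Sum>j\<in>I'. r' j * c j b) else r' i * c i0 b)" for i
    have "(\<Sum>i\<in>I. s (r i) (w i)) = s (r i0) (w i0) + (\<Sum>i\<in>I'. s (r i) (w i))"
      using i0 insert(4) by (simp add: I'_def sum.remove)
    also have "(\<Sum>i\<in>I'. s (r i) (w i)) = (\<Sum>i\<in>I'. s (r' i * c i0 b) (w i))"
      by (rule sum.cong) (auto simp: r_def I'_def)
    also have "s (r i0) (w i0) + \<dots> = (\<Sum>i\<in>I'. s (r' i) (w' i))"
      by (simp add: r_def w'_def scale_right_diff_distrib sum_subtractf scale_sum_left
          scale_minus_left)
    finally have "(\<Sum>i\<in>I. s (r i) (w i)) = 0"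
      using r'(2) by simp
    moreover obtain i1 where "i1 \<in> I'" "r' i1 \<noteq> 0"
      using r'(1) by auto
    then have "i1 \<in> I" "r i1 \<noteq> 0"
      using i0 by (auto simp: r_def I'_def)
    ultimately show ?thesis by blast
  qed
qed

lemma nontrivial_relation_if_finite_rank:
  fixes s :: "'a::idom \<Rightarrow> 'v::ab_group_add \<Rightarrow> 'v"
  assumes s: "module s" and "finite B" and B: "\<And>v. \<exists>p c. p \<noteq> 0 \<and> s p v = (\<Sum>b\<in>B. s (c b) b)"
  shows "\<exists>r. (\<exists>i\<le>card B. r i \<noteq> 0) \<and> (\<Sum>i\<le>card B. s (r i) (w i)) = 0"
proof -
  interpret module s by (rule s)
  obtain P C where PC: "\<And>v. P v \<noteq> 0" "\<And>v. s (P v) v = (\<Sum>b\<in>B. s (C v b) b)"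
    using B by metis
  obtain r where r: "\<exists>i\<le>card B. r i \<noteq> 0" "(\<Sum>i\<le>card B. s (r i) (s (P (w i)) (w i))) = 0"
    using nontrivial_relation_if_card_gt[OF s \<open>finite B\<close>, of "{..card B}" "\<lambda>i. s (P (w i)) (w i)"
        "\<lambda>i. C (w i)"] PC(2)
    by auto
  show ?thesis
  proof (intro exI[of _ "\<lambda>i. r i * P (w i)"] conjI)
    show "\<exists>i\<le>card B. r i * P (w i) \<noteq> 0"
      using r(1) PC(1) by auto
    show "(\<Sum>i\<le>card B. s (r i * P (w i)) (w i)) = 0"
      using r(2) by simp
  qed
qed

section \<open>Polynomials over \<open>\<complex>[z]\<close> and shifts of \<open>z\<close>\<close>

lemma shift_invariant_ratio_const:
  fixes u v :: "complex poly" and p :: complex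
  assumes v: "v \<noteq> 0" and p: "p \<noteq> 0" and eq: "pcompose u [:p, 1:] * v = u * pcompose v [:p, 1:]"
  shows "\<exists>c. u = smult c v"
proof -
  txt \<open>\<open>h = u - c v\<close> satisfies the same functional equation and vanishes at \<open>z0\<close>; choosing
    \<open>z0\<close> so that \<open>v\<close> has no root on \<open>z0 + \<nat> p\<close> propagates the zero along that progression.\<close>
  define R where "R = {x. poly v x = 0}"
  have "finite R" using poly_roots_finite[OF v] by (simp add: R_def)
  define s where "s = 1 + (\<Sum>r\<in>R. cmod (r / p))"
  define z0 where "z0 = of_real s * p"
  have good: "poly v (z0 + of_nat k * p) \<noteq> 0" for k
  proof
    assume "poly v (z0 + of_nat k * p) = 0"
    then have "cmod ((z0 + of_nat k * p) / p) \<le> (\<Sum>r\<in>R. cmod (r / p))"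
      by (intro member_le_sum \<open>finite R\<close>) (simp_all add: R_def)
    moreover have "(z0 + of_nat k * p) / p = of_real (s + real k)"
      using p by (simp add: z0_def field_simps)
    moreover have "s + real k \<ge> 0"
      unfolding s_def by (intro add_nonneg_nonneg sum_nonneg) auto
    ultimately have "s + real k \<le> (\<Sum>r\<in>R. cmod (r / p))"
      by (metis norm_of_real abs_of_nonneg)
    then show False unfolding s_def by simp
  qed
  define c where "c = poly u z0 / poly v z0"
  define h where "h = u - smult c v"
  have step: "poly h (x + p) * poly v x = poly h x * poly v (x + p)" for x
  proof -
    have "poly (pcompose u [:p, 1:] * v) x = poly (u * pcompose v [:p, 1:]) x"
      using eq by simp
    then show ?thesis
      by (simp add: h_def poly_pcompose algebra_simps)
  qed
  have h_zero: "poly h (z0 + of_nat k * p) = 0" for k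
  proof (induct k)
    case 0
    show ?case using good[of 0] by (simp add: h_def c_def)
  next
    case (Suc k)
    then have "poly h (z0 + of_nat k * p + p) = 0"
      using step[of "z0 + of_nat k * p"] good[of k] by simp
    then show ?case by (simp add: algebra_simps)
  qed
  have "h = 0"
  proof (rule ccontr)
    assume "h \<noteq> 0"
    then have "finite {x. poly h x = 0}" by (rule poly_roots_finite)
    moreover have "range (\<lambda>k::nat. z0 + of_nat k * p) \<subseteq> {x. poly h x = 0}"
      using h_zero by auto
    moreover have "inj (\<lambda>k::nat. z0 + of_nat k * p)"
      using p by (auto intro!: injI)
    ultimately show False
      by (meson finite_imageD finite_subset infinite_UNIV_nat)
  qed
  then show ?thesis by (auto simp: h_def)
qed

text \<open>Elements of \<open>\<complex>[z][t]\<close> are modelled as \<open>complex poly poly\<close>, the outer variable being \<open>t\<close>;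
  \<open>shift_coeffs k F\<close> is \<open>F(z + k, t)\<close>.\<close>

definition shift_coeffs :: "int \<Rightarrow> complex poly poly \<Rightarrow> complex poly poly" where
  "shift_coeffs k F = map_poly (\<lambda>c. pcompose c [:of_int k, 1:]) F"

lemma pcompose_shift_eq_0_iff: "pcompose c [:a, 1:] = 0 \<longleftrightarrow> c = (0::complex poly)"
  by (rule pcompose_eq_0_iff) simp

lemma coeff_shift_coeffs: "coeff (shift_coeffs k F) i = pcompose (coeff F i) [:of_int k, 1:]"
  unfolding shift_coeffs_def by (subst coeff_map_poly) simp_all

lemma degree_shift_coeffs [simp]: "degree (shift_coeffs k F) = degree F"
  unfolding shift_coeffs_def by (rule degree_map_poly) (simp add: pcompose_shift_eq_0_iff)

lemma shift_coeffs_eq_0_iff [simp]: "shift_coeffs k F = 0 \<longleftrightarrow> F = 0"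
  unfolding shift_coeffs_def by (subst map_poly_eq_0_iff) (auto simp: pcompose_shift_eq_0_iff)

lemma shift_coeffs_0 [simp]: "shift_coeffs 0 F = F"
  by (rule poly_eqI) (simp add: coeff_shift_coeffs)

lemma shift_coeffs_shift_coeffs [simp]: "shift_coeffs k (shift_coeffs l F) = shift_coeffs (k + l) F"
proof (rule poly_eqI)
  have "[:of_int l, 1:] \<circ>\<^sub>p [:of_int k, 1:] = [:of_int (k + l), 1::complex:]"
    by (simp add: pcompose_pCons)
  then show "coeff (shift_coeffs k (shift_coeffs l F)) i = coeff (shift_coeffs (k + l) F) i" for i
    by (simp add: coeff_shift_coeffs pcompose_assoc[symmetric])
qed

lemma shift_coeffs_smult:
  "shift_coeffs k (smult a F) = smult (pcompose a [:of_int k, 1:]) (shift_coeffs k F)"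
  by (rule poly_eqI) (simp add: coeff_shift_coeffs pcompose_mult)

lemma constant_coeff_ratios_if_shift_proportional:
  fixes F :: "complex poly poly"
  assumes F: "F \<noteq> 0" and a: "a \<noteq> 0" and q: "q \<noteq> 0"
    and proportional: "smult a (shift_coeffs q F) = smult b F"
  shows "\<exists>c G. c \<noteq> 0 \<and> G \<noteq> 0 \<and> F = smult c (map_poly (\<lambda>x. [:x:]) G)"
proof -
  define c where "c = lead_coeff F"
  have c: "c \<noteq> 0" using F by (simp add: c_def)
  have coeff_prop: "a * pcompose (coeff F j) [:of_int q, 1:] = b * coeff F j" for j
    using arg_cong[OF proportional, of "\<lambda>F. coeff F j"] by (simp add: coeff_shift_coeffs)
  have "\<exists>C. coeff F j = smult C c" for j
  proof (rule shift_invariant_ratio_const[OF c])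
    show "(of_int q :: complex) \<noteq> 0" using q by simp
    have "a * (pcompose (coeff F j) [:of_int q, 1:] * c) = b * coeff F j * c"
      by (simp only: mult.assoc[symmetric] coeff_prop)
    also have "\<dots> = coeff F j * (b * c)"
      by (simp only: mult_ac)
    also have "b * c = a * pcompose c [:of_int q, 1:]"
      by (simp only: c_def coeff_prop)
    finally have "a * (pcompose (coeff F j) [:of_int q, 1:] * c) =
        a * (coeff F j * pcompose c [:of_int q, 1:])"
      by (simp only: mult_ac)
    then show "pcompose (coeff F j) [:of_int q, 1:] * c = coeff F j * pcompose c [:of_int q, 1:]"
      using a by simp
  qed
  then obtain C where C: "\<And>j. coeff F j = smult (C j) c" by metis
  define G where "G = (\<Sum>j\<le>degree F. monom (C j) j)"
  have "F = smult c (map_poly (\<lambda>x. [:x:]) G)"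
  proof (rule poly_eqI)
    fix j
    show "coeff F j = coeff (smult c (map_poly (\<lambda>x. [:x:]) G)) j"
    proof (cases "j \<le> degree F")
      case True
      then show ?thesis
        by (simp add: G_def C coeff_map_poly coeff_sum coeff_monom mult.commute)
    next
      case False
      then show ?thesis
        by (simp add: G_def coeff_map_poly coeff_sum coeff_monom coeff_eq_0)
    qed
  qed
  moreover from this have "G \<noteq> 0" using F by auto
  ultimately show ?thesis using c by blast
qed

section \<open>Annihilators of an endomorphism of a torsion-free module\<close>

lemma eigenvector_if_poly_annihilates:
  fixes s :: "complex \<Rightarrow> 'v::ab_group_add \<Rightarrow> 'v"
  assumes s: "module s" and f: "module_hom s s f"
  shows "G \<noteq> 0 \<Longrightarrow> poly_act s f G v = 0 \<Longrightarrow> v \<noteq> 0 \<Longrightarrow> \<exists>\<mu> w. w \<noteq> 0 \<and> f w = s \<mu> w"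
proof (induct "degree G" arbitrary: G v rule: less_induct)
  interpret module s by (rule s)
  case less
  show ?case
  proof (cases "degree G = 0")
    case True
    then obtain a where "G = [:a:]" "a \<noteq> 0"
      using less.prems(1) by (metis degree_eq_zeroE pCons_0_0)
    then have "v = s (inverse a) (poly_act s f G v)"
      by simp
    then show ?thesis
      using less.prems(2,3) by simp
  next
    case False
    then obtain \<mu> where "poly G \<mu> = 0"
      by (metis fundamental_theorem_of_algebra constant_degree)
    then obtain Q where Q: "G = [:-\<mu>, 1:] * Q"
      by (metis poly_eq_0_iff_dvd dvdE)
    with less.prems(1) have "Q \<noteq> 0" by auto
    then have "degree G = 1 + degree Q"
      unfolding Q by (subst degree_mult_eq) auto
    then have "degree Q < degree G"
      by simp
    define w where "w = poly_act s f Q v"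
    have "poly_act s f [:-\<mu>, 1:] w = 0"
      using less.prems(2) unfolding Q w_def by (simp only: poly_act_mult[OF f])
    then have "f w = s \<mu> w"
      by (simp add: poly_act_pCons[OF f] scale_minus_left add_eq_0_iff add.commute)
    then show ?thesis
      using less.hyps[OF \<open>degree Q < degree G\<close> \<open>Q \<noteq> 0\<close> _ less.prems(3)]
      by (cases "w = 0") (auto simp: w_def)
  qed
qed

locale torsion_free_module_endo = module scale
  for scale :: "'a::idom \<Rightarrow> 'v::ab_group_add \<Rightarrow> 'v" (infixr \<open>*s\<close> 75) +
  fixes f :: "'v \<Rightarrow> 'v"
  assumes hom: "module_hom scale scale f"
    and torsion_free: "a *s v = 0 \<Longrightarrow> a \<noteq> 0 \<Longrightarrow> v = 0"
begin

abbreviation act :: "'a poly \<Rightarrow> 'v \<Rightarrow> 'v" where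
  "act \<equiv> poly_act scale f"

lemma act_hom: "module_hom scale scale (act G)"
  by (rule module_hom_poly_act[OF hom])

lemma common_annihilated_vector:
  "finite I \<Longrightarrow> (\<And>i. i \<in> I \<Longrightarrow> v i \<noteq> 0 \<and> act (G i) (v i) = 0) \<Longrightarrow> \<exists>i\<in>I. p i \<noteq> 0 \<Longrightarrow>
   (\<Sum>i\<in>I. p i *s v i) = 0 \<Longrightarrow>
   \<exists>i1\<in>I. \<exists>i2\<in>I. i1 \<noteq> i2 \<and> (\<exists>u. u \<noteq> 0 \<and> act (G i1) u = 0 \<and> act (G i2) u = 0)"
proof (induct "card I" arbitrary: I v p rule: less_induct)
  case less
  txt \<open>Applying \<open>act (G i0)\<close> to the relation kills its \<open>i0\<close>-term and keeps every other
    \<open>v i\<close> in the kernel of \<open>act (G i)\<close>, so either some \<open>act (G i0) (v i)\<close> vanishes or we get a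
    shorter relation.\<close>
  obtain i0 where i0: "i0 \<in> I" "p i0 \<noteq> 0" using less.prems by blast
  define w where "w i = act (G i0) (v i)" for i
  define I' where "I' = {i \<in> I - {i0}. p i \<noteq> 0}"
  have I': "I' \<subseteq> I" "i0 \<notin> I'" "finite I'" "card I' < card I"
    using less.prems(1) i0(1) by (auto simp: I'_def intro: psubset_card_mono)
  have "w i0 = 0" using less.prems(2) i0 by (simp add: w_def)
  have "0 = act (G i0) (\<Sum>i\<in>I. p i *s v i)"
    using less.prems(4) by (simp add: module_hom.zero[OF act_hom])
  also have "\<dots> = (\<Sum>i\<in>I. p i *s w i)"
    by (simp add: w_def module_hom.sum[OF act_hom] module_hom.scale[OF act_hom])
  also have "\<dots> = (\<Sum>i\<in>I'. p i *s w i)"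
    using \<open>w i0 = 0\<close> by (intro sum.mono_neutral_right less.prems(1) I'(1)) (auto simp: I'_def)
  finally have relation: "(\<Sum>i\<in>I'. p i *s w i) = 0" by simp
  show ?case
  proof (cases "\<exists>i\<in>I'. w i = 0")
    case True
    then obtain i where "i \<in> I'" "w i = 0" by blast
    then have "i \<in> I" "i \<noteq> i0" using I' by auto
    moreover have "v i \<noteq> 0" "act (G i0) (v i) = 0" "act (G i) (v i) = 0"
      using less.prems(2)[OF \<open>i \<in> I\<close>] \<open>w i = 0\<close> by (auto simp: w_def)
    ultimately show ?thesis
      using i0(1) by blast
  next
    case False
    have "p i0 *s v i0 \<noteq> 0"
      using torsion_free i0 less.prems(2) by blast
    have "I' \<noteq> {}"
    proof
      assume "I' = {}"
      then have "(\<Sum>i\<in>{i0}. p i *s v i) = (\<Sum>i\<in>I. p i *s v i)"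
        using less.prems(1) i0(1) by (intro sum.mono_neutral_left) (auto simp: I'_def)
      with less.prems(4) \<open>p i0 *s v i0 \<noteq> 0\<close> show False by simp
    qed
    moreover have "w i \<noteq> 0 \<and> act (G i) (w i) = 0" if "i \<in> I'" for i
      using False that I'(1) less.prems(2)[of i]
      by (auto simp: w_def poly_act_commute[OF hom] module_hom.zero[OF act_hom])
    ultimately show ?thesis
      using less.hyps[OF I'(4) I'(3) _ _ relation] I'(1) by (force simp: I'_def)
  qed
qed

lemma minimal_annihilator_exists:
  assumes "G \<noteq> 0" "v \<noteq> 0" "act G v = 0"
  obtains F u where "F \<noteq> 0" "u \<noteq> 0" "act F u = 0"
    "\<And>H w. H \<noteq> 0 \<Longrightarrow> degree H < degree F \<Longrightarrow> act H w = 0 \<Longrightarrow> w = 0"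
proof -
  define P where "P n \<longleftrightarrow> (\<exists>F u. F \<noteq> 0 \<and> degree F = n \<and> u \<noteq> 0 \<and> act F u = 0)" for n
  have "P (degree G)"
    unfolding P_def using assms by blast
  then have "P (LEAST n. P n)"
    by (rule LeastI)
  then obtain F u where F: "F \<noteq> 0" "degree F = (LEAST n. P n)" "u \<noteq> 0" "act F u = 0"
    unfolding P_def by blast
  show ?thesis
  proof (rule that[OF F(1,3,4)])
    fix H w
    assume H: "H \<noteq> 0" "degree H < degree F" "act H w = 0"
    show "w = 0"
    proof (rule ccontr)
      assume "w \<noteq> 0"
      with H have "P (degree H)"
        unfolding P_def by blast
      with H(2) F(2) show False
        using not_less_Least by auto
    qed
  qed
qed

lemma annihilators_proportional_if_minimal:
  assumes minimal: "\<And>H u. H \<noteq> 0 \<Longrightarrow> degree H < degree G \<Longrightarrow> act H u = 0 \<Longrightarrow> u = 0"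
    and "degree G' = degree G" "G \<noteq> 0"
    and "u \<noteq> 0" "act G u = 0" "act G' u = 0"
  shows "\<exists>a b. a \<noteq> 0 \<and> smult a G' = smult b G"
proof -
  define r where "r = pseudo_mod G' G"
  obtain a q where aq: "a \<noteq> 0" "smult a G' = G * q + r"
    using pseudo_mod(1)[OF \<open>G \<noteq> 0\<close>] r_def by blast
  have "r = smult a G' - q * G"
    using aq(2) by (simp add: algebra_simps)
  then have "act r u = a *s act G' u - act q (act G u)"
    by (simp add: poly_act_diff poly_act_smult poly_act_mult[OF hom])
  then have "r = 0"
    using pseudo_mod(2)[OF \<open>G \<noteq> 0\<close>] minimal assms(4-6) r_def
    by (metis scale_zero_right diff_zero module_hom.zero[OF act_hom])
  have "degree q = 0"
  proof (cases "q = 0")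
    case False
    have "degree G = degree (smult a G')"
      using aq(1) assms(2) by simp
    also have "\<dots> = degree G + degree q"
      using aq(2) \<open>r = 0\<close> \<open>G \<noteq> 0\<close> False by (simp add: degree_mult_eq)
    finally show ?thesis by simp
  qed simp
  then obtain b where "q = [:b:]"
    by (metis degree_eq_zeroE)
  then show ?thesis
    using aq \<open>r = 0\<close> by auto
qed

end

section \<open>\<open>sl(2)\<close>-modules\<close>

locale sl2_rep =
  fixes sc :: "complex \<Rightarrow> 'v::ab_group_add \<Rightarrow> 'v" and Lm L0 Lp :: "'v \<Rightarrow> 'v"
  assumes sl2_module: "sl2_module sc Lm L0 Lp"
begin

sublocale V: module sc
  using sl2_module by (simp add: sl2_module_def module_iff_vector_space)

lemma Lm_hom: "module_hom sc sc Lm"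
  and L0_hom: "module_hom sc sc L0"
  and Lp_hom: "module_hom sc sc Lp"
  using sl2_module by (simp_all add: sl2_module_def module_hom_iff_linear)

lemma Lp_Lm: "Lp (Lm v) = Lm (Lp v) + sc 2 (L0 v)"
  using sl2_module by (simp add: sl2_module_def diff_eq_eq add.commute)

lemma Lp_L0: "Lp (L0 v) = L0 (Lp v) + Lp v"
  using sl2_module by (simp add: sl2_module_def diff_eq_eq eq_neg_iff_add_eq_0 algebra_simps)

lemma Lm_L0: "Lm (L0 v) = L0 (Lm v) - Lm v"
  using sl2_module by (simp add: sl2_module_def diff_eq_eq algebra_simps)

abbreviation zact :: "complex poly \<Rightarrow> 'v \<Rightarrow> 'v" where
  "zact \<equiv> poly_act sc L0"

lemma module_zact: "module zact"
  by (rule V.module_poly_act[OF L0_hom])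

lemma torsion_free_iff: "torsion_free sc L0 \<longleftrightarrow> (\<forall>p v. zact p v = 0 \<longrightarrow> p \<noteq> 0 \<longrightarrow> v = 0)"
  by (auto simp: torsion_free_def opoly_eq_poly_act)

lemma zact_hom:
  assumes "module_hom sc sc T" "\<And>v. T (L0 v) = L0 (T v)"
  shows "module_hom zact zact T"
  using assms module_zact
  by (simp add: module_hom_iff module_hom.add V.poly_act_commuting_hom[OF L0_hom])

lemma Lp_zact: "Lp (zact p v) = zact (pcompose p [:1, 1:]) (Lp v)"
  by (rule V.poly_act_pcompose[OF L0_hom Lp_hom])
    (simp add: V.poly_act_pCons[OF L0_hom] Lp_L0 add.commute)

lemma Lm_zact: "Lm (zact p v) = zact (pcompose p [:-1, 1:]) (Lm v)"
  by (rule V.poly_act_pcompose[OF L0_hom Lm_hom])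
    (simp add: V.poly_act_pCons[OF L0_hom] Lm_L0 V.scale_minus_left)

lemma sc_2: "sc 2 x = x + x"
  using V.scale_left_distrib[of 1 1 x] by (simp add: one_add_one)

lemma linear_casimir: "Vector_Spaces.linear sc sc (casimir Lm L0 Lp)"
  unfolding module_hom_iff_linear[symmetric] module_hom_iff
  by (simp add: V.module_axioms casimir_def module_hom.add[OF L0_hom] module_hom.add[OF Lm_hom]
      module_hom.add[OF Lp_hom] module_hom.scale[OF L0_hom] module_hom.scale[OF Lm_hom]
      module_hom.scale[OF Lp_hom] V.scale_right_diff_distrib algebra_simps)

lemma casimir_L0: "casimir Lm L0 Lp (L0 v) = L0 (casimir Lm L0 Lp v)"
proof -
  have "Lm (Lp (L0 v)) = L0 (Lm (Lp v))"
    by (simp add: Lp_L0 Lm_L0 module_hom.add[OF Lm_hom])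
  then show ?thesis
    by (simp add: casimir_def module_hom.diff[OF L0_hom])
qed

lemma casimir_Lp: "casimir Lm L0 Lp (Lp v) = Lp (casimir Lm L0 Lp v)"
proof -
  have "Lp (L0 (L0 v)) = L0 (L0 (Lp v)) + L0 (Lp v) + L0 (Lp v) + Lp v"
    by (simp add: Lp_L0 module_hom.add[OF L0_hom] algebra_simps)
  moreover have "Lp (Lm (Lp v)) = Lm (Lp (Lp v)) + L0 (Lp v) + L0 (Lp v)"
    by (simp add: Lp_Lm sc_2 algebra_simps)
  ultimately show ?thesis
    by (simp add: casimir_def module_hom.diff[OF Lp_hom] Lp_L0 module_hom.add[OF L0_hom])
qed

lemma casimir_Lm: "casimir Lm L0 Lp (Lm v) = Lm (casimir Lm L0 Lp v)"
proof -
  have "Lm (L0 (L0 v)) = L0 (L0 (Lm v)) - L0 (Lm v) - L0 (Lm v) + Lm v"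
    by (simp add: Lm_L0 module_hom.diff[OF L0_hom] algebra_simps)
  moreover have "Lm (Lp (Lm v)) = Lm (Lm (Lp v)) + L0 (Lm v) - Lm v + L0 (Lm v) - Lm v"
    by (simp add: Lp_Lm sc_2 module_hom.add[OF Lm_hom] Lm_L0 algebra_simps)
  ultimately show ?thesis
    by (simp add: casimir_def module_hom.diff[OF Lm_hom] Lm_L0 module_hom.diff[OF L0_hom])
qed

lemma Lp_Lm_pow_highest_weight:
  assumes "Lp w = 0"
  shows "\<exists>a. Lp ((Lm ^^ Suc k) w) = zact [:a, of_nat (2 * Suc k):] ((Lm ^^ k) w)"
proof (induct k)
  case 0
  have "zact [:0, 2:] w = sc 2 (L0 w)"
    by (simp add: V.poly_act_pCons[OF L0_hom] module_hom.scale[OF L0_hom])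
  then show ?case
    using Lp_Lm[of w] assms by (intro exI[of _ 0]) (simp add: module_hom.zero[OF Lm_hom])
next
  case (Suc k)
  then obtain a where a: "Lp ((Lm ^^ Suc k) w) = zact [:a, of_nat (2 * Suc k):] ((Lm ^^ k) w)" ..
  let ?x = "(Lm ^^ Suc k) w"
  have "Lp ((Lm ^^ Suc (Suc k)) w) = Lm (Lp ?x) + sc 2 (L0 ?x)"
    by (simp add: Lp_Lm)
  also have "Lm (Lp ?x) = zact (pcompose [:a, of_nat (2 * Suc k):] [:-1, 1:]) ?x"
    unfolding a Lm_zact by simp
  also have "sc 2 (L0 ?x) = zact [:0, 2:] ?x"
    by (simp add: V.poly_act_pCons[OF L0_hom] module_hom.scale[OF L0_hom])
  also have "zact (pcompose [:a, of_nat (2 * Suc k):] [:-1, 1:]) ?x + zact [:0, 2:] ?x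
     = zact [:a - of_nat (2 * Suc k), of_nat (2 * Suc (Suc k)):] ?x"
    by (simp add: pcompose_pCons algebra_simps flip: V.poly_act_add)
  finally show ?case by blast
qed

lemma Lm_pow_nonzero_if_highest_weight:
  assumes "torsion_free sc L0" "w \<noteq> 0" "Lp w = 0"
  shows "(Lm ^^ k) w \<noteq> 0"
proof (induct k)
  case (Suc k)
  obtain a where a: "Lp ((Lm ^^ Suc k) w) = zact [:a, of_nat (2 * Suc k):] ((Lm ^^ k) w)"
    using Lp_Lm_pow_highest_weight[OF assms(3)] by blast
  have "of_nat (2 * Suc k) \<noteq> (0::complex)"
    by (simp only: of_nat_eq_0_iff) simp
  then have "[:a, of_nat (2 * Suc k):] \<noteq> 0"
    by simp
  then have "Lp ((Lm ^^ Suc k) w) \<noteq> 0"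
    using a Suc assms(1) by (auto simp: torsion_free_iff)
  then show ?case
    by (metis module_hom.zero[OF Lp_hom])
qed (use assms in simp)

end

section \<open>Schur's lemma for purely irreducible modules\<close>

text \<open>\<open>V\<close> is a \<open>\<complex>[z]\<close>-module via \<open>zact\<close>, and \<open>\<phi>\<close> is \<open>\<complex>[z]\<close>-linear; \<open>Z.act F\<close> is then \<open>F(L\<^sub>0, \<phi>)\<close>
  for \<open>F \<in> \<complex>[z][t]\<close>.\<close>

locale torsion_free_sl2_endo = sl2_rep sc Lm L0 Lp
  for sc :: "complex \<Rightarrow> 'v::ab_group_add \<Rightarrow> 'v" and Lm L0 Lp :: "'v \<Rightarrow> 'v" +
  fixes \<phi> :: "'v \<Rightarrow> 'v"
  assumes L0_torsion_free: "torsion_free sc L0"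
    and \<phi>_linear: "Vector_Spaces.linear sc sc \<phi>"
    and \<phi>_Lm: "\<And>v. \<phi> (Lm v) = Lm (\<phi> v)"
    and \<phi>_L0: "\<And>v. \<phi> (L0 v) = L0 (\<phi> v)"
    and \<phi>_Lp: "\<And>v. \<phi> (Lp v) = Lp (\<phi> v)"
begin

lemma \<phi>_hom: "module_hom sc sc \<phi>"
  using \<phi>_linear by (simp add: module_hom_iff_linear)

sublocale Z: torsion_free_module_endo zact \<phi>
  using module_zact zact_hom[OF \<phi>_hom \<phi>_L0] L0_torsion_free
  by (simp add: torsion_free_module_endo_def torsion_free_module_endo_axioms_def torsion_free_iff)

lemma Lp_act: "Lp (Z.act F v) = Z.act (shift_coeffs 1 F) (Lp v)"
  unfolding shift_coeffs_def
  by (rule poly_act_map_poly[OF module_zact module_zact])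
    (simp_all add: module_hom.add[OF Lp_hom] Lp_zact \<phi>_Lp)

lemma Lm_act: "Lm (Z.act F v) = Z.act (shift_coeffs (-1) F) (Lm v)"
  unfolding shift_coeffs_def
  by (rule poly_act_map_poly[OF module_zact module_zact])
    (simp_all add: module_hom.add[OF Lm_hom] Lm_zact \<phi>_Lm)

lemma Lp_pow_act: "Z.act F v = 0 \<Longrightarrow> Z.act (shift_coeffs (int j) F) ((Lp ^^ j) v) = 0"
proof (induct j)
  case (Suc j)
  then have "Lp (Z.act (shift_coeffs (int j) F) ((Lp ^^ j) v)) = 0"
    by (simp add: module_hom.zero[OF Lp_hom])
  then show ?case
    by (simp add: Lp_act add.commute)
qed simp

lemma Lm_pow_act: "Z.act F v = 0 \<Longrightarrow> Z.act (shift_coeffs (- int j) F) ((Lm ^^ j) v) = 0"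
proof (induct j)
  case (Suc j)
  then have "Lm (Z.act (shift_coeffs (- int j) F) ((Lm ^^ j) v)) = 0"
    by (simp add: module_hom.zero[OF Lm_hom])
  then show ?case
    by (simp add: Lm_act)
qed simp

lemma shifted_annihilators:
  assumes "Z.act F v = 0" "v \<noteq> 0"
  shows "\<exists>m. \<forall>i\<le>N. \<exists>x. x \<noteq> 0 \<and> Z.act (shift_coeffs (m + int i) F) x = 0"
proof (cases "\<forall>j\<le>N. (Lp ^^ j) v \<noteq> 0")
  case True
  show ?thesis
  proof (rule exI[of _ 0], intro allI impI)
    fix i
    assume "i \<le> N"
    then show "\<exists>x. x \<noteq> 0 \<and> Z.act (shift_coeffs (0 + int i) F) x = 0"
      using True Lp_pow_act[OF assms(1), of i] by auto
  qed
next
  case False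
  txt \<open>Going up with \<open>Lp\<close> reaches a highest-weight vector, whose \<open>Lm\<close>-string never vanishes.\<close>
  define j0 where "j0 = (LEAST j. (Lp ^^ j) v = 0)"
  obtain j1 where "(Lp ^^ j1) v = 0"
    using False by blast
  then have j0: "(Lp ^^ j0) v = 0"
    unfolding j0_def by (rule LeastI)
  then obtain j where j: "j0 = Suc j"
    using assms(2) by (cases j0) auto
  define w where "w = (Lp ^^ j) v"
  have "w \<noteq> 0"
    using not_less_Least[of j "\<lambda>j. (Lp ^^ j) v = 0"] j by (simp add: w_def j0_def)
  moreover have "Lp w = 0"
    using j0 j by (simp add: w_def)
  ultimately have Lm_pow_w: "(Lm ^^ k) w \<noteq> 0" for k
    by (rule Lm_pow_nonzero_if_highest_weight[OF L0_torsion_free])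
  have w_act: "Z.act (shift_coeffs (int j) F) w = 0"
    unfolding w_def by (rule Lp_pow_act[OF assms(1)])
  have "\<exists>x. x \<noteq> 0 \<and> Z.act (shift_coeffs (int j - int N + int i) F) x = 0" if "i \<le> N" for i
  proof (intro exI conjI)
    have "- int (N - i) + int j = int j - int N + int i"
      using that by simp
    then show "Z.act (shift_coeffs (int j - int N + int i) F) ((Lm ^^ (N - i)) w) = 0"
      using Lm_pow_act[OF w_act, of "N - i"] by (simp only: shift_coeffs_shift_coeffs)
  qed (rule Lm_pow_w)
  then show ?thesis by blast
qed

lemma eigenspace_pure: "pure_submodule sc Lm L0 Lp {x. \<phi> x = sc \<mu> x}"
proof -
  let ?W = "{x. \<phi> x = sc \<mu> x}"
  have "V.subspace ?W"
    by (rule V.subspaceI) (auto simp: module_hom.zero[OF \<phi>_hom] module_hom.add[OF \<phi>_hom]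
        module_hom.scale[OF \<phi>_hom] V.scale_right_distrib mult.commute)
  then have "sl2_submodule sc Lm L0 Lp ?W"
    by (auto simp: sl2_submodule_def \<phi>_Lm \<phi>_L0 \<phi>_Lp module_hom.scale[OF Lm_hom]
        module_hom.scale[OF L0_hom] module_hom.scale[OF Lp_hom])
  moreover have "x \<in> ?W" if "p \<noteq> 0" "opoly sc L0 p x \<in> ?W" for p x
  proof -
    have "zact p (\<phi> x - sc \<mu> x) = 0"
      using that(2)
      by (simp add: opoly_eq_poly_act module_hom.diff[OF V.module_hom_poly_act[OF L0_hom]]
          V.poly_act_commuting_hom[OF L0_hom \<phi>_hom \<phi>_L0]
          V.poly_act_commuting_hom[OF L0_hom V.module_hom_scale_self] module_hom.scale[OF L0_hom])
    then have "\<phi> x - sc \<mu> x = 0"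
      using L0_torsion_free that(1) unfolding torsion_free_iff by blast
    then show ?thesis by simp
  qed
  ultimately show ?thesis
    unfolding pure_submodule_def by blast
qed

context
  fixes N :: nat
  assumes rank: "\<And>w. \<exists>r. (\<exists>i\<le>N. r i \<noteq> 0) \<and> (\<Sum>i\<le>N. zact (r i) (w i)) = 0"
begin

lemma annihilator_exists: "\<exists>F. F \<noteq> 0 \<and> Z.act F v = 0"
proof -
  obtain r where r: "\<exists>i\<le>N. r i \<noteq> 0" "(\<Sum>i\<le>N. zact (r i) ((\<phi> ^^ i) v)) = 0"
    using rank[of "\<lambda>i. (\<phi> ^^ i) v"] by blast
  define F where "F = (\<Sum>i\<le>N. monom (r i) i)"
  obtain i where "i \<le> N" "r i \<noteq> 0"
    using r(1) by blast
  then have "coeff F i \<noteq> 0"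
    by (simp add: F_def coeff_sum coeff_monom)
  moreover have "Z.act F v = 0"
    using r(2) by (simp add: F_def Z.poly_act_sum Z.poly_act_monom)
  ultimately show ?thesis
    by (intro exI[of _ F]) auto
qed

lemma shift_proportional_if_minimal:
  assumes minimal: "\<And>H u. H \<noteq> 0 \<Longrightarrow> degree H < degree F \<Longrightarrow> Z.act H u = 0 \<Longrightarrow> u = 0"
    and "F \<noteq> 0" "Z.act F v = 0" "v \<noteq> 0"
  shows "\<exists>q a b. q \<noteq> 0 \<and> a \<noteq> 0 \<and> smult a (shift_coeffs q F) = smult b F"
proof -
  txt \<open>Among the \<open>N + 1\<close> shifts of \<open>F\<close> two annihilate a common vector, and minimality of
    \<open>degree F\<close> makes them proportional.\<close>
  obtain m where "\<forall>i\<le>N. \<exists>x. x \<noteq> 0 \<and> Z.act (shift_coeffs (m + int i) F) x = 0"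
    using shifted_annihilators[OF assms(3,4)] by blast
  then obtain X where X: "\<And>i. i \<le> N \<Longrightarrow> X i \<noteq> 0 \<and> Z.act (shift_coeffs (m + int i) F) (X i) = 0"
    by metis
  obtain r where "\<exists>i\<le>N. r i \<noteq> 0" "(\<Sum>i\<le>N. zact (r i) (X i)) = 0"
    using rank[of X] by blast
  then obtain i1 i2 u where "i1 \<noteq> i2" "u \<noteq> 0" and
    u: "Z.act (shift_coeffs (m + int i1) F) u = 0" "Z.act (shift_coeffs (m + int i2) F) u = 0"
    using Z.common_annihilated_vector[of "{..N}" X "\<lambda>i. shift_coeffs (m + int i) F" r] X
    by (auto simp: atMost_def)
  then obtain a b where "a \<noteq> 0"
    and ab: "smult a (shift_coeffs (m + int i2) F) = smult b (shift_coeffs (m + int i1) F)"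
    using Z.annihilators_proportional_if_minimal[of "shift_coeffs (m + int i1) F"] minimal \<open>F \<noteq> 0\<close>
    by (metis degree_shift_coeffs shift_coeffs_eq_0_iff)
  define k where "k = - (m + int i1)"
  define q where "q = int i2 - int i1"
  define a' where "a' = pcompose a [:of_int k, 1:]"
  define b' where "b' = pcompose b [:of_int k, 1:]"
  have "smult a' (shift_coeffs q F) = smult b' F"
    using arg_cong[OF ab, of "shift_coeffs k"]
    by (simp add: shift_coeffs_smult k_def q_def a'_def b'_def)
  moreover have "q \<noteq> 0" "a' \<noteq> 0"
    using \<open>i1 \<noteq> i2\<close> \<open>a \<noteq> 0\<close> by (simp_all add: q_def a'_def pcompose_shift_eq_0_iff)
  ultimately show ?thesis by blast
qed

lemma eigenvector_exists:
  fixes v :: 'v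
  assumes "v \<noteq> 0"
  shows "\<exists>\<mu> w. w \<noteq> 0 \<and> \<phi> w = sc \<mu> w"
proof -
  obtain A where A: "A \<noteq> 0" "Z.act A v = 0"
    using annihilator_exists by blast
  obtain F u where F: "F \<noteq> 0" "u \<noteq> 0" "Z.act F u = 0"
    and minimal: "\<And>H w. H \<noteq> 0 \<Longrightarrow> degree H < degree F \<Longrightarrow> Z.act H w = 0 \<Longrightarrow> w = 0"
    using Z.minimal_annihilator_exists[OF A(1) assms A(2)] by blast
  have "\<exists>q a b. q \<noteq> 0 \<and> a \<noteq> 0 \<and> smult a (shift_coeffs q F) = smult b F"
    using minimal F(1,3,2) by (rule shift_proportional_if_minimal)
  then obtain q a b where "q \<noteq> 0" "a \<noteq> 0" "smult a (shift_coeffs q F) = smult b F"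
    by blast
  then obtain c G where "c \<noteq> 0" "G \<noteq> 0" and F_eq: "F = smult c (map_poly (\<lambda>x. [:x:]) G)"
    using constant_coeff_ratios_if_shift_proportional[OF F(1)] by blast
  have "Z.act (map_poly (\<lambda>x. [:x:]) G) u = poly_act sc \<phi> G u"
    by (rule poly_act_map_poly[OF V.module_axioms module_zact, where f = id, simplified, symmetric])
      simp_all
  then have "zact c (poly_act sc \<phi> G u) = 0"
    using F(3) by (simp add: F_eq Z.poly_act_smult)
  then have "poly_act sc \<phi> G u = 0"
    using L0_torsion_free \<open>c \<noteq> 0\<close> unfolding torsion_free_iff by blast
  then show ?thesis
    using eigenvector_if_poly_annihilates[OF V.module_axioms \<phi>_hom \<open>G \<noteq> 0\<close> _ F(2)] by blast
qed

end

end

theorem purely_irreducible_endomorphism_scalar: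
  fixes sc :: "complex \<Rightarrow> 'v::ab_group_add \<Rightarrow> 'v"
  assumes irreducible: "purely_irreducible sc Lm L0 Lp"
    and "Vector_Spaces.linear sc sc \<phi>" "\<And>v. \<phi> (Lm v) = Lm (\<phi> v)"
    and "\<And>v. \<phi> (L0 v) = L0 (\<phi> v)" "\<And>v. \<phi> (Lp v) = Lp (\<phi> v)"
  shows "\<exists>c. \<forall>v. \<phi> v = sc c v"
proof -
  interpret torsion_free_sl2_endo sc Lm L0 Lp \<phi>
    using assms by (simp add: torsion_free_sl2_endo_def torsion_free_sl2_endo_axioms_def sl2_rep_def
        purely_irreducible_def)
  obtain B where "finite B" "\<And>v. \<exists>p c. p \<noteq> 0 \<and> zact p v = (\<Sum>b\<in>B. zact (c b) b)"
    using irreducible by (auto simp: purely_irreducible_def finite_rank_def opoly_eq_poly_act)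
  note rank = nontrivial_relation_if_finite_rank[OF module_zact this]
  obtain v :: 'v where "v \<noteq> 0"
    using irreducible by (auto simp: purely_irreducible_def)
  then obtain \<mu> w where "w \<noteq> 0" "\<phi> w = sc \<mu> w"
    using eigenvector_exists[OF rank] by blast
  then have "{x. \<phi> x = sc \<mu> x} = UNIV"
    using eigenspace_pure[of \<mu>] irreducible by (auto simp: purely_irreducible_def)
  then show ?thesis by blast
qed

theorem proposition7p28:
  fixes sc :: "complex \<Rightarrow> 'v::ab_group_add \<Rightarrow> 'v"
    and Lm L0 Lp :: "'v \<Rightarrow> 'v"
  assumes "purely_irreducible sc Lm L0 Lp"
  shows "(\<exists>\<mu>::complex. \<forall>v. casimir Lm L0 Lp v = sc \<mu> v) \<and>
         (\<forall>\<phi>. Vector_Spaces.linear sc sc \<phi> \<and>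
               (\<forall>v. \<phi> (Lm v) = Lm (\<phi> v)) \<and> (\<forall>v. \<phi> (L0 v) = L0 (\<phi> v)) \<and>
               (\<forall>v. \<phi> (Lp v) = Lp (\<phi> v))
            \<longrightarrow> (\<exists>c::complex. \<forall>v. \<phi> v = sc c v))"
proof -
  interpret sl2_rep sc Lm L0 Lp
    using assms by (simp add: sl2_rep_def purely_irreducible_def)
  show ?thesis
    using purely_irreducible_endomorphism_scalar[OF assms]
      purely_irreducible_endomorphism_scalar[OF assms linear_casimir casimir_Lm casimir_L0 casimir_Lp]
    by blast
qed

end
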